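(* Let $k>2$ and $n\ge 1$, $\ell\ge 0$ be integers. Let ${\sf S}^{(r)}_k(n,\ell)$ denote the number of restricted $k$-noncrossing RNA structures on $\{1,\dots,n\}$ with exactly $\ell$ isolated vertices, ${\sf S}^{(r)}_k(n)=\sum_\ell{\sf S}^{(r)}_k(n,\ell)$, and $f_k(m,\ell)$ the number of $k$-noncrossing digraphs on $\{1,\dots,m\}$ with exactly $\ell$ isolated vertices ($f_k(m,\ell)=0$ if $\ell>m$). For integers $m\ge 0$ and $b_1,b_2\ge 0$ let $\lambda(m,b_1,b_2)$ be the number of sets consisting of exactly $b_1$ arcs of the form $(i,i+1)$ and exactly $b_2$ arcs of the form $(i,i+2)$ on $\{1,\dots,m\}$, pairwise vertex-disjoint; set $\lambda(m,b_1,b_2)=0$ if $b_1<0$ or $b_2<0$. Then $$ {\sf S}^{(r)}_k(n,\ell)=\sum_{\substack{b_1,b_2\ge 0\\ 2(b_1+b_2)\le n}}(-1)^{b_1+b_2}\lambda(n,b_1,b_2)\,f_k(n-2(b_1+b_2),\ell), $$ $$ {\sf S}^{(r)}_k(n)=\sum_{\substack{b_1,b_2\ge 0\\ 2(b_1+b_2)\le n}}(-1)^{b_1+b_2}\lambda(n,b_1,b_2)\left\{\sum_{\ell=0}^{n-2(b_1+b_2)}f_k(n-2(b_1+b_2),\ell)\right\}. $$ Moreover, for all $n\ge 4$ and $b_1,b_2\ge 0$, $$ \lambda(n,b_1,b_2)=\lambda(n-2,b_1-1,b_2)+\lambda(n-1,b_1,b_2)+\lambda(n-4,b_1,b_2-2)+\lambda(n-3,b_1,b_2-1),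 $$ and $\lambda(n,0,0)=1$, $\lambda(n,b_1,0)=\binom{n-b_1}{b_1}$, $\lambda(1,0,1)=0$, $\lambda(n,0,1)=n-2$ for $n\ge 2$, and $\lambda(n,0,2)=0$ for $n=2,3$.
   Context: A digraph on $\{1,\dots,n\}$ is a set of arcs $(i,j)$ with $1\le i<j\le n$. It is $k$-noncrossing if every vertex lies in at most one arc and there are no $k$ arcs $(i_1,j_1),\dots,(i_k,j_k)$ with $i_1<\dots<i_k<j_1<\dots<j_k$. A vertex is isolated if it lies in no arc. A $1$-arc is an arc $(i,i+1)$ and a $2$-arc is an arc $(i,i+2)$. A $k$-noncrossing RNA structure is a $k$-noncrossing digraph with no $1$-arc; it is restricted if it also has no $2$-arc. *)

theory Defs
  imports Main
begin

definition digraph_on :: "nat \<Rightarrow> (nat \<times> nat) set \<Rightarrow> bool" where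
  "digraph_on n A \<longleftrightarrow> A \<subseteq> {(i, j). 1 \<le> i \<and> i < j \<and> j \<le> n}"

definition vertex_disjoint :: "(nat \<times> nat) set \<Rightarrow> bool" where
  "vertex_disjoint A \<longleftrightarrow>
     (\<forall>a\<in>A. \<forall>b\<in>A. a \<noteq> b \<longrightarrow> {fst a, snd a} \<inter> {fst b, snd b} = {})"

definition has_k_crossing :: "nat \<Rightarrow> (nat \<times> nat) set \<Rightarrow> bool" where
  "has_k_crossing k A \<longleftrightarrow>
     (\<exists>ii jj :: nat \<Rightarrow> nat.
        (\<forall>t<k. (ii t, jj t) \<in> A) \<and>
        (\<forall>t. Suc t < k \<longrightarrow> ii t < ii (Suc t) \<and> jj t < jj (Suc t)) \<and>
        ii (k - 1) < jj 0)"

definition k_noncrossing :: "nat \<Rightarrow> nat \<Rightarrow> (nat \<times> nat) set \<Rightarrow> bool" where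
  "k_noncrossing k n A \<longleftrightarrow> digraph_on n A \<and> vertex_disjoint A \<and> \<not> has_k_crossing k A"

definition isolated :: "nat \<Rightarrow> (nat \<times> nat) set \<Rightarrow> nat set" where
  "isolated n A = {v \<in> {1..n}. \<forall>(i, j)\<in>A. v \<noteq> i \<and> v \<noteq> j}"

definition restricted_rna :: "nat \<Rightarrow> nat \<Rightarrow> (nat \<times> nat) set \<Rightarrow> bool" where
  "restricted_rna k n A \<longleftrightarrow> k_noncrossing k n A \<and>
     (\<forall>(i, j)\<in>A. j \<noteq> i + 1 \<and> j \<noteq> i + 2)"

definition S_r :: "nat \<Rightarrow> nat \<Rightarrow> nat \<Rightarrow> nat" where
  "S_r k n l = card {A. restricted_rna k n A \<and> card (isolated n A) = l}"

text \<open>S^(r)_k(n) = sum over l of S^(r)_k(n,l), i.e. the number of all restricted structures.\<close>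
definition S_r_total :: "nat \<Rightarrow> nat \<Rightarrow> nat" where
  "S_r_total k n = card {A. restricted_rna k n A}"

definition f_nc :: "nat \<Rightarrow> nat \<Rightarrow> nat \<Rightarrow> nat" where
  "f_nc k m l = card {A. k_noncrossing k m A \<and> card (isolated m A) = l}"

definition lam :: "nat \<Rightarrow> int \<Rightarrow> int \<Rightarrow> nat" where
  "lam m b1 b2 = (if b1 < 0 \<or> b2 < 0 then 0 else
     card {A. digraph_on m A \<and> vertex_disjoint A \<and>
               (\<forall>(i, j)\<in>A. j = i + 1 \<or> j = i + 2) \<and>
               int (card {(i, j)\<in>A. j = i + 1}) = b1 \<and>
               int (card {(i, j)\<in>A. j = i + 2}) = b2})"

end

theory Submission
  imports Defs "HOL-Library.Infinite_Set"
begin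

(* Inclusion-exclusion over 1- and 2-arcs. A k-noncrossing digraph D contributes
   \<Sum>(-1)^|X| over the sets X of its 1- and 2-arcs, which is 1 if D is restricted and 0 otherwise.
   Exchanging the sums, one counts for each vertex-disjoint set X of 1- and 2-arcs the k-noncrossing
   digraphs containing X. For k \<ge> 3 every arc of a k-crossing has length at least 3 (each of the
   other k - 1 \<ge> 2 arcs has an endpoint strictly inside it), so X never takes part in a crossing:
   deleting X together with its 2|X| vertices and renumbering the remaining vertices increasingly
   is a bijection onto the k-noncrossing digraphs on n - 2|X| vertices, preserving isolated
   vertices. Grouping the sets X by their numbers of 1- and 2-arcs produces lambda.
   The recurrence for lambda distinguishes how the last vertex n is covered: not at all, by (n-1,n),
   by (n-2,n) with n-1 isolated, or by (n-2,n) together with (n-3,n-1). *)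

section \<open>Vertices of digraphs\<close>

definition verts :: "(nat \<times> nat) set \<Rightarrow> nat set" where
  "verts A = fst ` A \<union> snd ` A"

lemma arc_in_verts: "(i, j) \<in> A \<Longrightarrow> i \<in> verts A" "(i, j) \<in> A \<Longrightarrow> j \<in> verts A"
  unfolding verts_def by force+

lemma verts_Un: "verts (A \<union> C) = verts A \<union> verts C"
  unfolding verts_def by auto

lemma verts_subset: "E \<subseteq> S \<times> S \<Longrightarrow> verts E \<subseteq> S"
  unfolding verts_def by auto

lemma verts_image: "verts (map_prod g g ` E) = g ` verts E"
  unfolding verts_def by force

lemma isolated_eq_diff_verts: "isolated n A = {1..n} - verts A"
  unfolding isolated_def verts_def by force

lemma card_isolated_le: "card (isolated n A) \<le> n"
proof -
  have "isolated n A \<subseteq> {1..n}"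
    by (auto simp: isolated_def)
  then have "card (isolated n A) \<le> card {1..n}"
    by (rule card_mono[OF finite_atLeastAtMost])
  then show ?thesis
    by simp
qed

lemma digraph_on_subset: "digraph_on n A \<Longrightarrow> A \<subseteq> {1..n} \<times> {1..n}"
  unfolding digraph_on_def by auto

lemma finite_digraphs: "finite {A. digraph_on n A}"
  by (rule finite_subset[of _ "Pow ({1..n} \<times> {1..n})"]) (use digraph_on_subset in blast, simp)

lemma digraph_on_finite: "digraph_on n A \<Longrightarrow> finite A"
  using digraph_on_subset finite_subset by blast

lemma finite_arcs_filter [simp]: "finite A \<Longrightarrow> finite {(i, j)\<in>A. P i j}"
  by (rule finite_subset[of _ A]) auto

lemma vertex_disjoint_subset: "vertex_disjoint A \<Longrightarrow> C \<subseteq> A \<Longrightarrow> vertex_disjoint C"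
  unfolding vertex_disjoint_def by blast

lemma vertex_disjoint_same_arc:
  "vertex_disjoint A \<Longrightarrow> a \<in> A \<Longrightarrow> b \<in> A \<Longrightarrow> v \<in> {fst a, snd a} \<Longrightarrow> v \<in> {fst b, snd b}
    \<Longrightarrow> a = b"
  unfolding vertex_disjoint_def by blast

lemma vertex_disjoint_Un:
  assumes "verts A \<inter> verts C = {}"
  shows "vertex_disjoint (A \<union> C) \<longleftrightarrow> vertex_disjoint A \<and> vertex_disjoint C"
  using assms unfolding vertex_disjoint_def verts_def by blast

lemma card_verts:
  assumes "finite A" "vertex_disjoint A" "\<forall>a\<in>A. fst a \<noteq> snd a"
  shows "card (verts A) = 2 * card A"
proof -
  have "verts A = (\<Union>a\<in>A. {fst a, snd a})"
    unfolding verts_def by auto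
  then have "card (verts A) = (\<Sum>a\<in>A. card {fst a, snd a})"
    using assms(1,2) by (simp add: card_UN_disjoint vertex_disjoint_def)
  also have "\<dots> = (\<Sum>a\<in>A. 2)"
    using assms(3) by (intro sum.cong) auto
  finally show ?thesis by simp
qed

section \<open>Short matchings and the numbers lambda\<close>

definition short_matching :: "nat \<Rightarrow> (nat \<times> nat) set \<Rightarrow> bool" where
  "short_matching n A \<longleftrightarrow>
     digraph_on n A \<and> vertex_disjoint A \<and> (\<forall>(i, j)\<in>A. j = i + 1 \<or> j = i + 2)"

definition num_1arcs :: "(nat \<times> nat) set \<Rightarrow> nat" where
  "num_1arcs A = card {(i, j)\<in>A. j = i + 1}"

definition num_2arcs :: "(nat \<times> nat) set \<Rightarrow> nat" where
  "num_2arcs A = card {(i, j)\<in>A. j = i + 2}"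

(* The arc counts are compared as integers, so that short_matchings, like lam, is empty for
   negative arguments. *)
definition short_matchings :: "nat \<Rightarrow> int \<Rightarrow> int \<Rightarrow> (nat \<times> nat) set set" where
  "short_matchings n b1 b2 =
     {A. short_matching n A \<and> int (num_1arcs A) = b1 \<and> int (num_2arcs A) = b2}"

lemma lam_eq_card_short_matchings: "lam n b1 b2 = card (short_matchings n b1 b2)"
  by (auto simp: lam_def short_matchings_def short_matching_def num_1arcs_def num_2arcs_def)

lemma short_matching_arc:
  "short_matching n A \<Longrightarrow> (i, j) \<in> A \<Longrightarrow> 1 \<le> i \<and> i < j \<and> j \<le> n \<and> (j = i + 1 \<or> j = i + 2)"
  unfolding short_matching_def digraph_on_def by auto

lemma short_matching_finite: "short_matching n A \<Longrightarrow> finite A"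
  unfolding short_matching_def using digraph_on_finite by blast

lemma short_matching_empty [simp]: "short_matching n {}"
  by (simp add: short_matching_def digraph_on_def vertex_disjoint_def)

lemma finite_short_matching_sets: "finite {A. short_matching n A}"
  by (rule finite_subset[OF _ finite_digraphs[of n]]) (auto simp: short_matching_def)

lemma finite_short_matchings: "finite (short_matchings n b1 b2)"
  by (rule finite_subset[OF _ finite_short_matching_sets[of n]]) (auto simp: short_matchings_def)

lemma num_arcs_empty [simp]: "num_1arcs {} = 0" "num_2arcs {} = 0"
  by (simp_all add: num_1arcs_def num_2arcs_def)

lemma num_arcs_insert:
  assumes "finite A" "(i, j) \<notin> A"
  shows "num_1arcs (insert (i, j) A) = num_1arcs A + (if j = i + 1 then 1 else 0)"
    and "num_2arcs (insert (i, j) A) = num_2arcs A + (if j = i + 2 then 1 else 0)"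
proof -
  have "{(i', j')\<in>insert (i, j) A. P i' j'} =
      (if P i j then insert (i, j) {(i', j')\<in>A. P i' j'} else {(i', j')\<in>A. P i' j'})" for P
    by auto
  then show "num_1arcs (insert (i, j) A) = num_1arcs A + (if j = i + 1 then 1 else 0)"
    and "num_2arcs (insert (i, j) A) = num_2arcs A + (if j = i + 2 then 1 else 0)"
    using assms by (auto simp: num_1arcs_def num_2arcs_def card_insert_if)
qed

lemma num_arcs_Un_disjoint:
  assumes "finite A" "finite X" "A \<inter> X = {}"
  shows "num_1arcs (A \<union> X) = num_1arcs A + num_1arcs X"
    and "num_2arcs (A \<union> X) = num_2arcs A + num_2arcs X"
proof -
  have "{(i, j)\<in>A \<union> X. P i j} = {(i, j)\<in>A. P i j} \<union> {(i, j)\<in>X. P i j}" for P :: "nat \<Rightarrow> nat \<Rightarrow> bool"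
    by auto
  then show "num_1arcs (A \<union> X) = num_1arcs A + num_1arcs X"
    and "num_2arcs (A \<union> X) = num_2arcs A + num_2arcs X"
    unfolding num_1arcs_def num_2arcs_def using assms by (simp_all add: card_Un_disjoint disjoint_iff)
qed

lemma num_2arcs_pos: "finite A \<Longrightarrow> (i, i + 2) \<in> A \<Longrightarrow> 0 < num_2arcs A"
  unfolding num_2arcs_def by (subst card_gt_0_iff) auto

lemma card_short_matching: "short_matching n A \<Longrightarrow> card A = num_1arcs A + num_2arcs A"
proof -
  assume A: "short_matching n A"
  then have "A = {(i, j)\<in>A. j = i + 1} \<union> {(i, j)\<in>A. j = i + 2}"
    unfolding short_matching_def by auto
  also have "card \<dots> = num_1arcs A + num_2arcs A"
    unfolding num_1arcs_def num_2arcs_def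
    by (rule card_Un_disjoint) (use short_matching_finite[OF A] in auto)
  finally show ?thesis .
qed

lemma short_matching_verts:
  assumes "short_matching n A"
  shows "verts A \<subseteq> {1..n}" "card (verts A) = 2 * card A"
proof -
  show "verts A \<subseteq> {1..n}"
    using assms unfolding verts_def by (auto dest: short_matching_arc)
  show "card (verts A) = 2 * card A"
    using assms short_matching_finite[OF assms]
    by (intro card_verts) (auto simp: short_matching_def dest: short_matching_arc)
qed

lemma short_matching_card_le: "short_matching n A \<Longrightarrow> 2 * card A \<le> n"
  using card_mono[OF finite_atLeastAtMost, of "verts A" 1 n] short_matching_verts[of n A] by simp

lemma lam_too_many:
  assumes "n < 2 * (b1 + b2)"
  shows "lam n (int b1) (int b2) = 0"
proof -
  have "short_matchings n (int b1) (int b2) = {}"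
    using assms short_matching_card_le card_short_matching
    by (fastforce simp: short_matchings_def)
  then show ?thesis
    by (simp add: lam_eq_card_short_matchings)
qed

lemma lam_0_0: "lam n 0 0 = 1"
proof -
  have "A = {}" if "short_matching n A" "num_1arcs A = 0" "num_2arcs A = 0" for A
    using that card_short_matching short_matching_finite by fastforce
  then have "short_matchings n 0 0 = {{}}"
    by (auto simp: short_matchings_def)
  then show ?thesis
    by (simp add: lam_eq_card_short_matchings)
qed

lemma lam_single_2arc:
  assumes "2 \<le> n"
  shows "lam n 0 1 = n - 2"
proof -
  have "short_matchings n 0 1 = (\<lambda>i. {(i, i + 2)}) ` {1..n - 2}"
  proof (intro equalityI subsetI)
    fix A assume "A \<in> short_matchings n 0 1"
    then have A: "short_matching n A" "num_1arcs A = 0" "num_2arcs A = 1"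
      by (simp_all add: short_matchings_def)
    then obtain i j where ij: "A = {(i, j)}"
      using card_short_matching[OF A(1)] by (auto simp: card_Suc_eq)
    then have "j = i + 2"
      using A short_matching_arc[OF A(1), of i j] by (auto simp: num_arcs_insert)
    then show "A \<in> (\<lambda>i. {(i, i + 2)}) ` {1..n - 2}"
      using ij short_matching_arc[OF A(1), of i j] by auto
  next
    fix A assume "A \<in> (\<lambda>i. {(i, i + 2)}) ` {1..n - 2}"
    then obtain i where "A = {(i, i + 2)}" "1 \<le> i" "i \<le> n - 2"
      by auto
    then show "A \<in> short_matchings n 0 1"
      using assms
      by (auto simp: short_matchings_def short_matching_def digraph_on_def vertex_disjoint_def
          num_arcs_insert)
  qed
  moreover have "inj_on (\<lambda>i. {(i, i + 2 :: nat)}) {1..n - 2}"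
    by (rule inj_onI) simp
  ultimately show ?thesis
    by (simp add: lam_eq_card_short_matchings card_image)
qed

definition arcs_above :: "nat \<Rightarrow> (nat \<times> nat) set \<Rightarrow> (nat \<times> nat) set" where
  "arcs_above v A = {a\<in>A. v < snd a}"

lemma short_matching_Un:
  assumes A: "short_matching v A" and X: "short_matching n X"
    and above: "\<forall>a\<in>X. v < fst a" and "v \<le> n"
  shows "short_matching n (A \<union> X)"
proof -
  have "{fst a, snd a} \<inter> {fst x, snd x} = {}" if "a \<in> A" "x \<in> X" for a x
    using short_matching_arc[OF A, of "fst a" "snd a"] short_matching_arc[OF X, of "fst x" "snd x"]
      above that by auto
  then have "vertex_disjoint (A \<union> X)"
    using A X unfolding short_matching_def vertex_disjoint_def by blast
  then show ?thesis
    using A X \<open>v \<le> n\<close> unfolding short_matching_def digraph_on_def by auto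
qed

lemma short_matching_below:
  "short_matching n A \<Longrightarrow> short_matching v {a\<in>A. snd a \<le> v}"
  unfolding short_matching_def digraph_on_def vertex_disjoint_def by auto

lemma short_matching_arcs_below: "short_matching v A \<Longrightarrow> a \<in> A \<Longrightarrow> snd a \<le> v"
  using short_matching_arc[of v A "fst a" "snd a"] by auto

lemma short_matchings_Un_arcs_above:
  assumes X: "short_matching n X" and above: "\<forall>a\<in>X. v < fst a" and "v \<le> n"
    and A: "A \<in> short_matchings v (b1 - int (num_1arcs X)) (b2 - int (num_2arcs X))"
  shows "A \<inter> X = {}" and "A \<union> X \<in> short_matchings n b1 b2" and "arcs_above v (A \<union> X) = X"
proof -
  have A': "short_matching v A"
    using A by (simp add: short_matchings_def)
  have X_above: "v < snd x" if "x \<in> X" for x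
    using above that short_matching_arc[OF X, of "fst x" "snd x"] by auto
  then show "A \<inter> X = {}"
    using short_matching_arcs_below[OF A'] by fastforce
  then show "A \<union> X \<in> short_matchings n b1 b2"
    using A short_matching_Un[OF A' X above \<open>v \<le> n\<close>]
      num_arcs_Un_disjoint[OF short_matching_finite[OF A'] short_matching_finite[OF X]]
    by (simp add: short_matchings_def)
  show "arcs_above v (A \<union> X) = X"
    using short_matching_arcs_below[OF A'] X_above by (fastforce simp: arcs_above_def)
qed

lemma short_matchings_diff_arcs_above:
  assumes X: "short_matching n X"
    and A: "A \<in> short_matchings n b1 b2" and X_eq: "arcs_above v A = X"
  shows "A - X \<in> short_matchings v (b1 - int (num_1arcs X)) (b2 - int (num_2arcs X))"
proof -
  have A': "short_matching n A"
    using A by (simp add: short_matchings_def)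
  have "A = (A - X) \<union> X" "finite (A - X)"
    using X_eq short_matching_finite[OF A'] by (auto simp: arcs_above_def)
  then have "num_1arcs A = num_1arcs (A - X) + num_1arcs X"
    "num_2arcs A = num_2arcs (A - X) + num_2arcs X"
    using num_arcs_Un_disjoint[of "A - X" X] short_matching_finite[OF X] by auto
  moreover have "A - X = {a\<in>A. snd a \<le> v}"
    using X_eq by (auto simp: arcs_above_def)
  ultimately show ?thesis
    using A short_matching_below[OF A', of v] by (simp add: short_matchings_def)
qed

lemma card_short_matchings_arcs_above:
  assumes X: "short_matching n X" and above: "\<forall>a\<in>X. v < fst a" and "v \<le> n"
  shows "card {A \<in> short_matchings n b1 b2. arcs_above v A = X}
           = lam v (b1 - int (num_1arcs X)) (b2 - int (num_2arcs X))"
proof -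
  let ?L = "short_matchings v (b1 - int (num_1arcs X)) (b2 - int (num_2arcs X))"
  let ?R = "{A \<in> short_matchings n b1 b2. arcs_above v A = X}"
  have "bij_betw (\<lambda>A. A \<union> X) ?L ?R"
  proof (rule bij_betw_byWitness[where f' = "\<lambda>A. A - X"])
    show "\<forall>A\<in>?L. A \<union> X - X = A"
      using short_matchings_Un_arcs_above(1)[OF assms] by blast
    show "\<forall>A\<in>?R. A - X \<union> X = A"
      by (auto simp: arcs_above_def)
    show "(\<lambda>A. A \<union> X) ` ?L \<subseteq> ?R"
      using short_matchings_Un_arcs_above(2,3)[OF assms] by blast
    show "(\<lambda>A. A - X) ` ?R \<subseteq> ?L"
      using short_matchings_diff_arcs_above[OF X] by blast
  qed
  then show ?thesis
    by (simp add: lam_eq_card_short_matchings bij_betw_same_card)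
qed

lemma arcs_above_eqI:
  assumes A: "short_matching n A" and "X \<subseteq> A" and X: "\<forall>(i, j)\<in>X. v < j"
    and covered: "\<And>w. v < w \<Longrightarrow> w \<in> verts A \<Longrightarrow> w \<in> verts X"
  shows "arcs_above v A = X"
proof -
  have "a \<in> X" if a: "a \<in> A" "v < snd a" for a
  proof -
    have "snd a \<in> verts A"
      using a(1) by (auto simp: verts_def)
    then obtain x where "x \<in> X" "snd a \<in> {fst x, snd x}"
      using covered[OF a(2)] by (auto simp: verts_def)
    moreover have "vertex_disjoint A"
      using A by (simp add: short_matching_def)
    ultimately show ?thesis
      using vertex_disjoint_same_arc[of A a x "snd a"] \<open>X \<subseteq> A\<close> a(1) by auto
  qed
  then show ?thesis
    using \<open>X \<subseteq> A\<close> X unfolding arcs_above_def by auto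
qed

lemma arcs_above_last_uncovered:
  assumes A: "short_matching n A"
  shows "arcs_above (n - 1) A = {} \<longleftrightarrow> n \<notin> verts A"
proof
  assume empty: "arcs_above (n - 1) A = {}"
  show "n \<notin> verts A"
  proof
    assume "n \<in> verts A"
    then obtain i j where "(i, j) \<in> A" "n \<in> {i, j}"
      by (auto simp: verts_def)
    then show False
      using empty short_matching_arc[OF A] by (force simp: arcs_above_def)
  qed
next
  assume uncovered: "n \<notin> verts A"
  have "w \<notin> verts A" if "n - 1 < w" for w
  proof
    assume "w \<in> verts A"
    then have "w \<le> n"
      using short_matching_verts(1)[OF A] by auto
    then have "w = n"
      using that by linarith
    then show False
      using uncovered \<open>w \<in> verts A\<close> by simp
  qed
  then show "arcs_above (n - 1) A = {}"
    by (intro arcs_above_eqI[OF A]) auto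
qed

lemma arcs_above_last_1arc:
  assumes A: "short_matching n A"
  shows "arcs_above (n - 2) A = {(n - 1, n)} \<longleftrightarrow> (n - 1, n) \<in> A"
proof
  assume arc: "(n - 1, n) \<in> A"
  have "w \<in> {n - 1, n}" if "n - 2 < w" "w \<in> verts A" for w
    using short_matching_verts(1)[OF A] that by auto
  then show "arcs_above (n - 2) A = {(n - 1, n)}"
    using arc short_matching_arc[OF A arc] by (intro arcs_above_eqI[OF A]) (auto simp: verts_def)
qed (auto simp: arcs_above_def)

lemma arcs_above_last_2arc:
  assumes A: "short_matching n A"
  shows "arcs_above (n - 3) A = {(n - 2, n)} \<longleftrightarrow> (n - 2, n) \<in> A \<and> n - 1 \<notin> verts A"
proof
  assume top: "arcs_above (n - 3) A = {(n - 2, n)}"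
  then have arc: "(n - 2, n) \<in> A"
    by (auto simp: arcs_above_def)
  have "n - 1 \<notin> verts A"
  proof
    assume "n - 1 \<in> verts A"
    then obtain i j where ij: "(i, j) \<in> A" "n - 1 \<in> {i, j}"
      by (auto simp: verts_def)
    have "3 \<le> n" "i < j"
      using short_matching_arc[OF A arc] short_matching_arc[OF A ij(1)] by auto
    then have "(i, j) \<in> arcs_above (n - 3) A"
      using ij by (auto simp: arcs_above_def)
    then show False
      using top ij(2) \<open>3 \<le> n\<close> by auto
  qed
  then show "(n - 2, n) \<in> A \<and> n - 1 \<notin> verts A"
    using arc by simp
next
  assume "(n - 2, n) \<in> A \<and> n - 1 \<notin> verts A"
  then have arc: "(n - 2, n) \<in> A" and free: "n - 1 \<notin> verts A"
    by simp_all
  have "w \<in> {n - 2, n}" if "n - 3 < w" "w \<in> verts A" for w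
  proof -
    have "w \<le> n" "w \<noteq> n - 1"
      using short_matching_verts(1)[OF A] free that(2) by auto
    then show ?thesis
      using that(1) by auto
  qed
  then show "arcs_above (n - 3) A = {(n - 2, n)}"
    using arc short_matching_arc[OF A arc] by (intro arcs_above_eqI[OF A]) (auto simp: verts_def)
qed

lemma arcs_above_last_2arcs:
  assumes A: "short_matching n A"
  shows "arcs_above (n - 4) A = {(n - 3, n - 1), (n - 2, n)} \<longleftrightarrow>
    (n - 2, n) \<in> A \<and> (n - 3, n - 1) \<in> A"
proof
  assume arcs: "(n - 2, n) \<in> A \<and> (n - 3, n - 1) \<in> A"
  then have "4 \<le> n"
    using short_matching_arc[OF A, of "n - 3" "n - 1"] by auto
  moreover have "w \<in> {n - 3, n - 2, n - 1, n}" if "n - 4 < w" "w \<in> verts A" for w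
    using short_matching_verts(1)[OF A] that by auto
  ultimately show "arcs_above (n - 4) A = {(n - 3, n - 1), (n - 2, n)}"
    using arcs by (intro arcs_above_eqI[OF A]) (auto simp: verts_def)
qed (auto simp: arcs_above_def)

lemma short_matching_last_vertex_cases:
  assumes A: "short_matching n A"
  obtains "n \<notin> verts A"
  | "(n - 1, n) \<in> A"
  | "(n - 2, n) \<in> A" "n - 1 \<notin> verts A"
  | "(n - 2, n) \<in> A" "(n - 3, n - 1) \<in> A"
proof -
  have arc: "1 \<le> i \<and> i < j \<and> j \<le> n \<and> (j = i + 1 \<or> j = i + 2)" if "(i, j) \<in> A" for i j
    using short_matching_arc[OF A that] .
  have unique: "(i, j) = (i', j')"
    if "(i, j) \<in> A" "(i', j') \<in> A" "x \<in> {i, j}" "x \<in> {i', j'}" for i j i' j' x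
    using vertex_disjoint_same_arc[of A "(i, j)" "(i', j')" x] A that by (simp add: short_matching_def)
  consider "n \<notin> verts A" | "(n - 1, n) \<in> A" | "(n - 2, n) \<in> A"
    using arc unfolding verts_def by force
  then show thesis
  proof cases
    case 3
    show thesis
    proof (cases "n - 1 \<in> verts A")
      case True
      then obtain i j where ij: "(i, j) \<in> A" "n - 1 \<in> {i, j}"
        by (auto simp: verts_def)
      have "(i, j) \<noteq> (n - 2, n)"
        using ij(2) arc[OF 3] by auto
      then have "i \<notin> {n - 2, n}" "j \<notin> {n - 2, n}"
        using unique[OF ij(1) 3] by blast+
      then have "j = n - 1" "i = n - 3"
        using ij(2) arc[OF ij(1)] by auto
      then have "(n - 3, n - 1) \<in> A"
        using ij(1) by simp
      then show thesis
        using 3 that(4) by blast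
    qed (use 3 that(3) in blast)
  qed (use that in blast)+
qed

lemma short_matching_last_arcs_exclusive:
  assumes A: "short_matching n A" and "(n - 1, n) \<in> A"
  shows "(n - 2, n) \<notin> A"
proof
  assume "(n - 2, n) \<in> A"
  moreover have "(n - 1, n) \<noteq> (n - 2, n)"
    using short_matching_arc[OF A \<open>(n - 1, n) \<in> A\<close>] by auto
  ultimately show False
    using vertex_disjoint_same_arc[of A "(n - 1, n)" "(n - 2, n)" n] A \<open>(n - 1, n) \<in> A\<close>
    by (simp add: short_matching_def)
qed

lemma lam_split_last_vertex:
  "lam n b1 b2 = card {A \<in> short_matchings n b1 b2. n \<notin> verts A}
     + card {A \<in> short_matchings n b1 b2. (n - 1, n) \<in> A}
     + card {A \<in> short_matchings n b1 b2. (n - 2, n) \<in> A \<and> n - 1 \<notin> verts A}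
     + card {A \<in> short_matchings n b1 b2. (n - 2, n) \<in> A \<and> (n - 3, n - 1) \<in> A}"
  (is "_ = card ?C1 + card ?C2 + card ?C3 + card ?C4")
proof -
  let ?S = "short_matchings n b1 b2"
  have A: "short_matching n A" if "A \<in> ?S" for A
    using that by (simp add: short_matchings_def)
  have cover: "?S = ?C1 \<union> ?C2 \<union> ?C3 \<union> ?C4"
    by (auto elim: short_matching_last_vertex_cases[OF A])
  have "?C1 \<inter> ?C2 = {}" "?C1 \<inter> ?C3 = {}" "?C1 \<inter> ?C4 = {}" "?C3 \<inter> ?C4 = {}"
    using arc_in_verts by blast+
  moreover have "?C2 \<inter> ?C3 = {}" "?C2 \<inter> ?C4 = {}"
    using short_matching_last_arcs_exclusive[OF A] by blast+
  moreover have "finite {A \<in> ?S. P A}" for P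
    using finite_short_matchings by simp
  ultimately have "card (?C1 \<union> ?C2 \<union> ?C3 \<union> ?C4) = card ?C1 + card ?C2 + card ?C3 + card ?C4"
    by (simp add: card_Un_disjoint Int_Un_distrib2)
  then show ?thesis
    by (simp only: lam_eq_card_short_matchings flip: cover)
qed

lemma card_short_matchings_last_vertex:
  shows "card {A \<in> short_matchings n b1 b2. n \<notin> verts A} = lam (n - 1) b1 b2"
    and "2 \<le> n \<Longrightarrow> card {A \<in> short_matchings n b1 b2. (n - 1, n) \<in> A} = lam (n - 2) (b1 - 1) b2"
    and "3 \<le> n \<Longrightarrow> card {A \<in> short_matchings n b1 b2. (n - 2, n) \<in> A \<and> n - 1 \<notin> verts A}
      = lam (n - 3) b1 (b2 - 1)"
    and "4 \<le> n \<Longrightarrow> card {A \<in> short_matchings n b1 b2. (n - 2, n) \<in> A \<and> (n - 3, n - 1) \<in> A}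
      = lam (n - 4) b1 (b2 - 2)"
proof -
  have same_class:
    "card {A \<in> short_matchings n b1 b2. P A} = card {A \<in> short_matchings n b1 b2. arcs_above v A = X}"
    if "\<And>A. short_matching n A \<Longrightarrow> arcs_above v A = X \<longleftrightarrow> P A" for P v X
    using that by (auto simp: short_matchings_def intro!: arg_cong[where f = card])
  note simps = num_arcs_insert short_matching_def digraph_on_def vertex_disjoint_def
  show "card {A \<in> short_matchings n b1 b2. n \<notin> verts A} = lam (n - 1) b1 b2"
    using same_class[OF arcs_above_last_uncovered[of n]] card_short_matchings_arcs_above[of n "{}" "n - 1" b1 b2]
    by simp
  show "card {A \<in> short_matchings n b1 b2. (n - 1, n) \<in> A} = lam (n - 2) (b1 - 1) b2" if "2 \<le> n"
  proof -
    have "n - 2 < n - 1" "n - 1 < n"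
      using that by linarith+
    then show ?thesis
      using same_class[OF arcs_above_last_1arc[of n]]
        card_short_matchings_arcs_above[of n "{(n - 1, n)}" "n - 2" b1 b2] that
      by (simp add: simps)
  qed
  show "card {A \<in> short_matchings n b1 b2. (n - 2, n) \<in> A \<and> n - 1 \<notin> verts A}
      = lam (n - 3) b1 (b2 - 1)" if "3 \<le> n"
  proof -
    have "n - 3 < n - 2" "n - 2 < n" "n = n - 2 + 2"
      using that by linarith+
    then show ?thesis
      using same_class[OF arcs_above_last_2arc[of n]]
        card_short_matchings_arcs_above[of n "{(n - 2, n)}" "n - 3" b1 b2] that
      by (simp add: simps)
  qed
  show "card {A \<in> short_matchings n b1 b2. (n - 2, n) \<in> A \<and> (n - 3, n - 1) \<in> A}
      = lam (n - 4) b1 (b2 - 2)" if "4 \<le> n"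
  proof -
    have "n - 4 < n - 3" "n - 4 < n - 2" "n - 2 < n - 1" "n - 1 = n - 3 + 2" "n = n - 2 + 2" "n - 1 < n"
      using that by linarith+
    then show ?thesis
      using same_class[OF arcs_above_last_2arcs[of n]]
        card_short_matchings_arcs_above[of n "{(n - 3, n - 1), (n - 2, n)}" "n - 4" b1 b2] that
      by (simp add: simps)
  qed
qed

lemma lam_recurrence:
  assumes "4 \<le> n"
  shows "lam n b1 b2 = lam (n - 2) (b1 - 1) b2 + lam (n - 1) b1 b2
                       + lam (n - 4) b1 (b2 - 2) + lam (n - 3) b1 (b2 - 1)"
  using lam_split_last_vertex[of n b1 b2] card_short_matchings_last_vertex[of n b1 b2] assms
  by simp

lemma lam_no_2arcs_recurrence:
  assumes "2 \<le> n"
  shows "lam n b1 0 = lam (n - 1) b1 0 + lam (n - 2) (b1 - 1) 0"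
proof -
  have "num_2arcs A \<noteq> 0" if A: "short_matching n A" "(n - 2, n) \<in> A" for A
  proof -
    have "n = n - 2 + 2"
      using short_matching_arc[OF A] by auto
    then show ?thesis
      using A num_2arcs_pos[OF short_matching_finite[OF A(1)], of "n - 2"] by simp
  qed
  then have empty: "{A \<in> short_matchings n b1 0. (n - 2, n) \<in> A \<and> P A} = {}" for P
    by (fastforce simp: short_matchings_def)
  show ?thesis
    using lam_split_last_vertex[of n b1 0] card_short_matchings_last_vertex(1,2)[of n b1 0] assms
    unfolding empty by simp
qed

lemma lam_no_2arcs: "lam n (int b) 0 = (n - b) choose b"
proof (induction n arbitrary: b rule: less_induct)
  case (less n)
  show ?case
  proof (cases "n \<le> 1")
    case True
    then show ?thesis
      using lam_0_0[of n] lam_too_many[of n b 0] by (cases b) auto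
  next
    case False
    show ?thesis
    proof (cases b)
      case 0
      then show ?thesis
        using lam_0_0 by simp
    next
      case (Suc c)
      have "lam n (int b) 0 = (n - 1 - b choose b) + (n - 2 - c choose c)"
        using lam_no_2arcs_recurrence[of n "int b"] less.IH[of "n - 1" b] less.IH[of "n - 2" c] False Suc
        by simp
      also have "\<dots> = (n - b) choose b"
      proof (cases "b < n")
        case True
        then have "n - b = Suc (n - 1 - b)" "n - 2 - c = n - 1 - b"
          using Suc by auto
        then show ?thesis
          using Suc by simp
      next
        case False
        then show ?thesis
          using Suc \<open>\<not> n \<le> 1\<close> by simp
      qed
      finally show ?thesis .
    qed
  qed
qed

section \<open>Arcs of k-crossings\<close>

lemma lift_Suc_mono_less_bounded:
  fixes f :: "nat \<Rightarrow> 'a::order"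
  assumes "\<forall>t. Suc t < k \<longrightarrow> f t < f (Suc t)" "s < t" "t < k"
  shows "f s < f t"
proof -
  have "{s..<t} \<subseteq> {i. Suc i < k}"
    using assms(3) by auto
  then show ?thesis
    using lift_Suc_mono_less_ivl[of "{i. Suc i < k}" f s t] assms(1,2) by blast
qed

lemma k_crossing_arc_long:
  assumes vd: "vertex_disjoint A" and "3 \<le> k"
    and arcs: "\<forall>t<k. (ii t, jj t) \<in> A"
    and mono: "\<forall>t. Suc t < k \<longrightarrow> ii t < ii (Suc t) \<and> jj t < jj (Suc t)"
    and cross: "ii (k - 1) < jj 0" and "t < k"
  shows "ii t + 2 < jj t"
proof -
  have ii: "ii s < ii s'" and jj: "jj s < jj s'" if "s < s'" "s' < k" for s s'
    using lift_Suc_mono_less_bounded[of k ii s s'] lift_Suc_mono_less_bounded[of k jj s s'] mono that by auto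
  have ii_last: "ii s \<le> ii (k - 1)" if "s < k" for s
  proof (cases "s < k - 1")
    case False
    then have "s = k - 1"
      using that by linarith
    then show ?thesis
      by simp
  qed (use ii[of s "k - 1"] in auto)
  have jj_first: "jj 0 \<le> jj s" if "s < k" for s
    using jj[of 0 s] that by (cases "s = 0") auto
  \<comment> \<open>the endpoint of the s-th arc that lies strictly inside the t-th arc\<close>
  define inner where "inner s = (if s < t then jj s else ii s)" for s
  have inner_between: "ii t < inner s \<and> inner s < jj t" if "s < k" "s \<noteq> t" for s
    using ii[of t s] jj[of s t] ii_last[of s] ii_last[of t] jj_first[of s] jj_first[of t]
      cross that \<open>t < k\<close> unfolding inner_def by (cases "s < t") auto
  have inner_arc: "inner s \<in> {ii s, jj s}" for s
    by (simp add: inner_def)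
  have inner_distinct: "inner s \<noteq> inner s'" if "s < k" "s' < k" "s < s'" for s s'
  proof
    assume "inner s = inner s'"
    then have "(ii s, jj s) = (ii s', jj s')"
      using vertex_disjoint_same_arc[OF vd arcs[rule_format, OF that(1)] arcs[rule_format, OF that(2)]]
        inner_arc[of s] inner_arc[of s'] by simp
    then show False
      using ii[OF that(3,2)] by simp
  qed
  have "\<exists>s s'. s < k \<and> s' < k \<and> s \<noteq> t \<and> s' \<noteq> t \<and> s < s'"
    using \<open>3 \<le> k\<close>
    by (intro exI[of _ "if t = 0 then 1 else 0"] exI[of _ "if t \<le> 1 then 2 else 1"]) auto
  then obtain s s' where "s < k" "s' < k" "s \<noteq> t" "s' \<noteq> t" "s < s'"
    by blast
  then show ?thesis
    using inner_between[of s] inner_between[of s'] inner_distinct[of s s'] by linarith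
qed

lemma has_k_crossing_mono: "has_k_crossing k A \<Longrightarrow> A \<subseteq> C \<Longrightarrow> has_k_crossing k C"
  unfolding has_k_crossing_def by blast

lemma has_k_crossing_Un_short_arcs:
  assumes "vertex_disjoint (B \<union> E)" "3 \<le> k" "\<forall>(i, j)\<in>B. j \<le> i + 2"
  shows "has_k_crossing k (B \<union> E) \<longleftrightarrow> has_k_crossing k E"
proof
  assume "has_k_crossing k (B \<union> E)"
  then obtain ii jj where arcs: "\<forall>t<k. (ii t, jj t) \<in> B \<union> E"
    and mono: "\<forall>t. Suc t < k \<longrightarrow> ii t < ii (Suc t) \<and> jj t < jj (Suc t)"
    and cross: "ii (k - 1) < jj 0"
    unfolding has_k_crossing_def by blast
  have "(ii t, jj t) \<in> E" if "t < k" for t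
    using k_crossing_arc_long[OF assms(1,2) arcs mono cross that] arcs assms(3) that by fastforce
  then show "has_k_crossing k E"
    using mono cross unfolding has_k_crossing_def by blast
qed (rule has_k_crossing_mono, auto)

lemma vertex_disjoint_image:
  assumes g: "inj_on g S" and E: "E \<subseteq> S \<times> S"
  shows "vertex_disjoint (map_prod g g ` E) \<longleftrightarrow> vertex_disjoint E"
proof -
  have "map_prod g g a \<noteq> map_prod g g b \<longleftrightarrow> a \<noteq> b"
    "{g (fst a), g (snd a)} \<inter> {g (fst b), g (snd b)} = {} \<longleftrightarrow> {fst a, snd a} \<inter> {fst b, snd b} = {}"
    if "a \<in> E" "b \<in> E" for a b
  proof -
    have "fst a \<in> S" "snd a \<in> S" "fst b \<in> S" "snd b \<in> S"
      using that E by (auto simp: mem_Times_iff)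
    then show "map_prod g g a \<noteq> map_prod g g b \<longleftrightarrow> a \<noteq> b"
      "{g (fst a), g (snd a)} \<inter> {g (fst b), g (snd b)} = {} \<longleftrightarrow> {fst a, snd a} \<inter> {fst b, snd b} = {}"
      using inj_on_eq_iff[OF g] by (auto simp: prod_eq_iff)
  qed
  then show ?thesis
    unfolding vertex_disjoint_def by (simp add: map_prod_def split_def)
qed

lemma has_k_crossing_imageI:
  assumes g: "strict_mono_on S g" and E: "E \<subseteq> S \<times> S" and "0 < k"
    and "has_k_crossing k E"
  shows "has_k_crossing k (map_prod g g ` E)"
proof -
  obtain ii jj where arcs: "\<forall>t<k. (ii t, jj t) \<in> E"
    and mono: "\<forall>t. Suc t < k \<longrightarrow> ii t < ii (Suc t) \<and> jj t < jj (Suc t)"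
    and cross: "ii (k - 1) < jj 0"
    using \<open>has_k_crossing k E\<close> unfolding has_k_crossing_def by blast
  have in_S: "ii t \<in> S" "jj t \<in> S" if "t < k" for t
    using arcs E that by auto
  have "g (ii (k - 1)) < g (jj 0)"
    using cross in_S strict_mono_onD[OF g] \<open>0 < k\<close> by simp
  moreover have "g (ii t) < g (ii (Suc t)) \<and> g (jj t) < g (jj (Suc t))" if "Suc t < k" for t
    using mono in_S[of t] in_S[of "Suc t"] strict_mono_onD[OF g] that by auto
  ultimately show ?thesis
    unfolding has_k_crossing_def
    by (intro exI[of _ "\<lambda>t. g (ii t)"] exI[of _ "\<lambda>t. g (jj t)"]) (use arcs in auto)
qed

lemma has_k_crossing_imageD:
  assumes g: "strict_mono_on S g" and E: "E \<subseteq> S \<times> S" and "0 < k"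
    and "has_k_crossing k (map_prod g g ` E)"
  shows "has_k_crossing k E"
proof -
  obtain ii jj where arcs: "\<forall>t<k. (ii t, jj t) \<in> map_prod g g ` E"
    and mono: "\<forall>t. Suc t < k \<longrightarrow> ii t < ii (Suc t) \<and> jj t < jj (Suc t)"
    and cross: "ii (k - 1) < jj 0"
    using \<open>has_k_crossing k (map_prod g g ` E)\<close> unfolding has_k_crossing_def by blast
  have "\<forall>t. \<exists>a. t < k \<longrightarrow> a \<in> E \<and> ii t = g (fst a) \<and> jj t = g (snd a)"
    using arcs by force
  then obtain p where p: "\<And>t. t < k \<Longrightarrow> p t \<in> E \<and> ii t = g (fst (p t)) \<and> jj t = g (snd (p t))"
    by metis
  have S: "fst (p t) \<in> S" "snd (p t) \<in> S" if "t < k" for t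
    using p[OF that] E by (auto simp: mem_Times_iff)
  have "fst (p (k - 1)) < snd (p 0)"
    using cross p[of "k - 1"] p[of 0] strict_mono_on_less[OF g] S[of "k - 1"] S[of 0] \<open>0 < k\<close>
    by simp
  moreover have "fst (p t) < fst (p (Suc t)) \<and> snd (p t) < snd (p (Suc t))" if "Suc t < k" for t
    using mono[rule_format, OF that] p[of t] p[of "Suc t"] strict_mono_on_less[OF g] S[of t] S[of "Suc t"]
      that by simp
  ultimately show ?thesis
    unfolding has_k_crossing_def
    by (intro exI[of _ "\<lambda>t. fst (p t)"] exI[of _ "\<lambda>t. snd (p t)"]) (use p in auto)
qed

lemma has_k_crossing_image:
  assumes "strict_mono_on S g" "E \<subseteq> S \<times> S" "0 < k"
  shows "has_k_crossing k (map_prod g g ` E) \<longleftrightarrow> has_k_crossing k E"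
  using has_k_crossing_imageI[OF assms] has_k_crossing_imageD[OF assms] by blast

section \<open>Removing a short matching\<close>

locale free_vertex_enumeration =
  fixes n m :: nat and B :: "(nat \<times> nat) set" and g :: "nat \<Rightarrow> nat"
  assumes short_matching_B: "short_matching n B"
    and bij_g: "bij_betw g {1..m} ({1..n} - verts B)"
    and mono_g: "strict_mono_on {1..m} g"
begin

definition expand :: "(nat \<times> nat) set \<Rightarrow> (nat \<times> nat) set" where
  "expand E = B \<union> map_prod g g ` E"

definition contract :: "(nat \<times> nat) set \<Rightarrow> (nat \<times> nat) set" where
  "contract D = {(a, b) \<in> {1..m} \<times> {1..m}. (g a, g b) \<in> D}"

lemma g_less_iff: "a \<in> {1..m} \<Longrightarrow> b \<in> {1..m} \<Longrightarrow> g a < g b \<longleftrightarrow> a < b"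
  using strict_mono_on_less[OF mono_g] .

lemma inj_g: "inj_on g {1..m}"
  using bij_g by (simp add: bij_betw_def)

lemma g_free: "a \<in> {1..m} \<Longrightarrow> g a \<in> {1..n} \<and> g a \<notin> verts B"
  using bij_betw_apply[OF bij_g] by blast

lemma digraph_on_expand_iff:
  assumes E: "E \<subseteq> {1..m} \<times> {1..m}"
  shows "digraph_on n (expand E) \<longleftrightarrow> digraph_on m E"
proof
  assume "digraph_on n (expand E)"
  then have "g a < g b" if "(a, b) \<in> E" for a b
    using that unfolding expand_def digraph_on_def by force
  then show "digraph_on m E"
    using E g_less_iff unfolding digraph_on_def by fastforce
next
  assume "digraph_on m E"
  then have "1 \<le> g a \<and> g a < g b \<and> g b \<le> n" if "(a, b) \<in> E" for a b
  proof -
    have "a \<in> {1..m}" "b \<in> {1..m}" "a < b"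
      using that \<open>digraph_on m E\<close> unfolding digraph_on_def by auto
    then show ?thesis
      using g_free[of a] g_free[of b] g_less_iff[of a b] by auto
  qed
  then show "digraph_on n (expand E)"
    using short_matching_B unfolding expand_def short_matching_def digraph_on_def by auto
qed

lemma k_noncrossing_expand_iff:
  assumes "3 \<le> k" and E: "E \<subseteq> {1..m} \<times> {1..m}"
  shows "k_noncrossing k n (expand E) \<longleftrightarrow> k_noncrossing k m E"
proof -
  have "verts B \<inter> verts (map_prod g g ` E) = {}"
    using verts_subset[OF E] g_free by (auto simp: verts_image)
  then have vd: "vertex_disjoint (expand E) \<longleftrightarrow> vertex_disjoint E"
    using vertex_disjoint_Un vertex_disjoint_image[OF inj_g E] short_matching_B
    unfolding expand_def short_matching_def by blast
  have "\<forall>(i, j)\<in>B. j \<le> i + 2"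
    using short_matching_B unfolding short_matching_def by auto
  then have "has_k_crossing k (expand E) \<longleftrightarrow> has_k_crossing k E" if "vertex_disjoint (expand E)"
    using has_k_crossing_Un_short_arcs[OF that[unfolded expand_def] \<open>3 \<le> k\<close>]
      has_k_crossing_image[OF mono_g E] \<open>3 \<le> k\<close>
    unfolding expand_def by simp
  then show ?thesis
    using vd digraph_on_expand_iff[OF E] unfolding k_noncrossing_def by blast
qed

lemma isolated_expand:
  assumes E: "E \<subseteq> {1..m} \<times> {1..m}"
  shows "isolated n (expand E) = g ` isolated m E"
proof -
  have "g ` isolated m E = g ` {1..m} - g ` verts E"
    using verts_subset[OF E] by (simp add: isolated_eq_diff_verts inj_on_image_set_diff[OF inj_g])
  also have "\<dots> = isolated n (expand E)"
    using bij_g by (auto simp: bij_betw_def isolated_eq_diff_verts expand_def verts_Un verts_image)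
  finally show ?thesis ..
qed

lemma contract_expand:
  assumes E: "E \<subseteq> {1..m} \<times> {1..m}"
  shows "contract (expand E) = E"
proof -
  have pair: "(g a, g b) \<in> expand E \<longleftrightarrow> (a, b) \<in> E" if "a \<in> {1..m}" "b \<in> {1..m}" for a b
  proof -
    have "g a \<notin> fst ` B"
      using g_free[OF that(1)] by (simp add: verts_def)
    then have "(g a, g b) \<notin> B"
      by (metis fst_conv image_eqI)
    moreover have "(g a, g b) \<in> map_prod g g ` E \<longleftrightarrow> (a, b) \<in> E"
      using inj_on_image_mem_iff[OF map_prod_inj_on[OF inj_g inj_g], of "(a, b)" E] that E by simp
    ultimately show ?thesis
      unfolding expand_def by (metis Un_iff)
  qed
  show ?thesis
  proof (rule set_eqI)
    fix x
    show "x \<in> contract (expand E) \<longleftrightarrow> x \<in> E"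
      using pair[of "fst x" "snd x"] E by (cases x) (auto simp: contract_def)
  qed
qed

lemma expand_contract:
  assumes D: "digraph_on n D" "vertex_disjoint D" and "B \<subseteq> D"
  shows "expand (contract D) = D"
proof
  show "expand (contract D) \<subseteq> D"
    using \<open>B \<subseteq> D\<close> unfolding expand_def contract_def by auto
next
  show "D \<subseteq> expand (contract D)"
  proof
    fix x assume "x \<in> D"
    show "x \<in> expand (contract D)"
    proof (cases "x \<in> B")
      case False
      have "v \<notin> verts B" if "v \<in> {fst x, snd x}" for v
      proof
        assume "v \<in> verts B"
        then obtain y where "y \<in> B" "v \<in> {fst y, snd y}"
          unfolding verts_def by auto
        then show False
          using vertex_disjoint_same_arc[OF D(2) \<open>x \<in> D\<close>, of y v] \<open>B \<subseteq> D\<close> \<open>x \<notin> B\<close> that by auto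
      qed
      moreover have "fst x \<in> {1..n}" "snd x \<in> {1..n}"
        using digraph_on_subset[OF D(1)] \<open>x \<in> D\<close> by auto
      ultimately have "fst x \<in> g ` {1..m}" "snd x \<in> g ` {1..m}"
        using bij_g by (auto simp: bij_betw_def)
      then obtain a b where "a \<in> {1..m}" "b \<in> {1..m}" "x = (g a, g b)"
        by (metis imageE prod.collapse)
      then show ?thesis
        using \<open>x \<in> D\<close> unfolding expand_def contract_def by force
    qed (simp add: expand_def)
  qed
qed

lemma card_supersets_eq_f_nc:
  assumes "3 \<le> k"
  shows "card {D. k_noncrossing k n D \<and> B \<subseteq> D \<and> card (isolated n D) = l} = f_nc k m l"
proof -
  let ?P = "{E. k_noncrossing k m E \<and> card (isolated m E) = l}"
  let ?Q = "{D. k_noncrossing k n D \<and> B \<subseteq> D \<and> card (isolated n D) = l}"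
  have bounded: "E \<subseteq> {1..m} \<times> {1..m}" if "k_noncrossing k m E" for E
    using that digraph_on_subset unfolding k_noncrossing_def by blast
  have card_isolated: "card (isolated n (expand E)) = card (isolated m E)"
    if "E \<subseteq> {1..m} \<times> {1..m}" for E
  proof -
    have "inj_on g (isolated m E)"
      by (rule inj_on_subset[OF inj_g]) (auto simp: isolated_def)
    then show ?thesis
      by (simp add: isolated_expand[OF that] card_image)
  qed
  have "bij_betw expand ?P ?Q"
  proof (rule bij_betw_byWitness[where f' = contract])
    show "\<forall>E\<in>?P. contract (expand E) = E"
      using bounded contract_expand by blast
    show "\<forall>D\<in>?Q. expand (contract D) = D"
      using expand_contract by (simp add: k_noncrossing_def)
    show "expand ` ?P \<subseteq> ?Q"
      using bounded k_noncrossing_expand_iff[OF assms] card_isolated by (auto simp: expand_def)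
    show "contract ` ?Q \<subseteq> ?P"
    proof (rule image_subsetI)
      fix D assume D: "D \<in> ?Q"
      have bounded: "contract D \<subseteq> {1..m} \<times> {1..m}"
        unfolding contract_def by auto
      have "expand (contract D) = D"
        using D expand_contract by (simp add: k_noncrossing_def)
      then show "contract D \<in> ?P"
        using D k_noncrossing_expand_iff[OF assms bounded] card_isolated[OF bounded] by simp
    qed
  qed
  then show ?thesis
    unfolding f_nc_def by (simp add: bij_betw_same_card)
qed

end

lemma card_k_noncrossing_supersets:
  assumes "3 \<le> k" and B: "short_matching n B"
  shows "card {D. k_noncrossing k n D \<and> B \<subseteq> D \<and> card (isolated n D) = l}
           = f_nc k (n - 2 * card B) l"
proof -
  let ?W = "{1..n} - verts B"
  obtain h where h: "bij_betw h {..<card ?W} ?W" "strict_mono_on {..<card ?W} h"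
    using ex_bij_betw_strict_mono_card[of ?W] by blast
  have "bij_betw (\<lambda>a. a - 1) {1..card ?W} {..<card ?W}"
    by (rule bij_betw_byWitness[where f' = Suc]) auto
  then have "bij_betw (\<lambda>a. h (a - 1)) {1..card ?W} ?W"
    using bij_betw_trans[OF _ h(1)] by (simp add: comp_def)
  moreover have "strict_mono_on {1..card ?W} (\<lambda>a. h (a - 1))"
    by (rule strict_mono_onI) (auto intro: strict_mono_onD[OF h(2)])
  ultimately interpret free_vertex_enumeration n "card ?W" B "\<lambda>a. h (a - 1)"
    using B by unfold_locales
  have "card ?W = n - 2 * card B"
    using short_matching_verts[OF B] by (simp add: card_Diff_subset finite_subset)
  then show ?thesis
    using card_supersets_eq_f_nc[OF assms(1)] by simp
qed

section \<open>Inclusion-exclusion\<close>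

lemma sum_Pow_minus_one_power:
  assumes "finite S"
  shows "(\<Sum>X\<in>Pow S. (-1 :: 'a :: comm_ring_1) ^ card X) = (if S = {} then 1 else 0)"
proof -
  from prod_diff_conv_sum[OF assms, of "\<lambda>_. (1 :: 'a)" "\<lambda>_. 1"]
  have "(\<Prod>x\<in>S. (1 :: 'a) - 1) = (\<Sum>X\<in>Pow S. (-1) ^ card X)"
    by simp
  then show ?thesis
    using assms by (simp add: power_0_left)
qed

definition short_arcs :: "(nat \<times> nat) set \<Rightarrow> (nat \<times> nat) set" where
  "short_arcs D = {(i, j)\<in>D. j = i + 1 \<or> j = i + 2}"

lemma Pow_short_arcs:
  assumes "digraph_on n D" "vertex_disjoint D"
  shows "Pow (short_arcs D) = {X. short_matching n X \<and> X \<subseteq> D}"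
proof (intro equalityI subsetI)
  fix X assume "X \<in> Pow (short_arcs D)"
  then have "X \<subseteq> D" "\<forall>(i, j)\<in>X. j = i + 1 \<or> j = i + 2"
    by (auto simp: short_arcs_def)
  then show "X \<in> {X. short_matching n X \<and> X \<subseteq> D}"
    using assms vertex_disjoint_subset unfolding short_matching_def digraph_on_def by blast
qed (auto simp: short_arcs_def short_matching_def)

lemma S_r_inclusion_exclusion:
  "int (S_r k n l) = (\<Sum>X | short_matching n X.
      (-1) ^ card X * int (card {D. k_noncrossing k n D \<and> X \<subseteq> D \<and> card (isolated n D) = l}))"
proof -
  define Ds where "Ds = {D. k_noncrossing k n D \<and> card (isolated n D) = l}"
  have fin_Ds: "finite Ds"
    by (rule finite_subset[OF _ finite_digraphs[of n]]) (auto simp: Ds_def k_noncrossing_def)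
  have "{A. restricted_rna k n A \<and> card (isolated n A) = l} = {D \<in> Ds. short_arcs D = {}}"
    by (auto simp: Ds_def restricted_rna_def short_arcs_def)
  then have "int (S_r k n l) = (\<Sum>D\<in>{D \<in> Ds. short_arcs D = {}}. 1)"
    by (simp add: S_r_def)
  also have "\<dots> = (\<Sum>D\<in>Ds. if short_arcs D = {} then 1 else 0)"
    by (rule sum.inter_filter[OF fin_Ds])
  also have "\<dots> = (\<Sum>D\<in>Ds. \<Sum>X\<in>{X. short_matching n X \<and> X \<subseteq> D}. (-1) ^ card X)"
  proof (rule sum.cong)
    fix D assume "D \<in> Ds"
    then have "digraph_on n D" "vertex_disjoint D"
      by (simp_all add: Ds_def k_noncrossing_def)
    moreover have "finite (short_arcs D)"
      using digraph_on_finite[OF \<open>digraph_on n D\<close>] by (simp add: short_arcs_def)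
    ultimately show "(if short_arcs D = {} then 1 else 0) =
        (\<Sum>X\<in>{X. short_matching n X \<and> X \<subseteq> D}. (-1 :: int) ^ card X)"
      using sum_Pow_minus_one_power[of "short_arcs D", where 'a = int] Pow_short_arcs by simp
  qed simp
  also have "\<dots> = (\<Sum>X | short_matching n X. \<Sum>D\<in>{D\<in>Ds. X \<subseteq> D}. (-1) ^ card X)"
    using sum.swap_restrict[OF fin_Ds finite_short_matching_sets[of n], of "\<lambda>_ X. (-1 :: int) ^ card X" "\<lambda>D X. X \<subseteq> D"]
    by simp
  also have "\<dots> = (\<Sum>X | short_matching n X. (-1) ^ card X * int (card {D\<in>Ds. X \<subseteq> D}))"
    by (simp add: mult.commute)
  finally show ?thesis
    by (simp add: Ds_def conj_commute conj_left_commute)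
qed

lemma sum_short_matchings_by_arc_counts:
  fixes h :: "nat \<Rightarrow> 'a :: comm_semiring_1"
  shows "(\<Sum>X | short_matching n X. h (card X))
       = (\<Sum>(b1, b2) | 2 * (b1 + b2) \<le> n. of_nat (lam n (int b1) (int b2)) * h (b1 + b2))"
proof -
  let ?M = "{X. short_matching n X}"
  let ?I = "{(b1, b2). 2 * (b1 + b2) \<le> n}"
  have fin_I: "finite ?I"
    by (rule finite_subset[of _ "{0..n} \<times> {0..n}"]) auto
  have "(\<Sum>X\<in>?M. h (card X)) = (\<Sum>b\<in>?I. \<Sum>X\<in>{X\<in>?M. (num_1arcs X, num_2arcs X) = b}. h (card X))"
    by (rule sum.group[symmetric, OF finite_short_matching_sets[of n] fin_I])
      (use short_matching_card_le card_short_matching in fastforce)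
  also have "\<dots> = (\<Sum>(b1, b2)\<in>?I. of_nat (lam n (int b1) (int b2)) * h (b1 + b2))"
  proof (rule sum.cong)
    fix b assume "b \<in> ?I"
    obtain b1 b2 where b: "b = (b1, b2)"
      by fastforce
    have "{X\<in>?M. (num_1arcs X, num_2arcs X) = b} = short_matchings n (int b1) (int b2)"
      by (auto simp: short_matchings_def b)
    moreover have "card X = b1 + b2" if "X \<in> short_matchings n (int b1) (int b2)" for X
      using that card_short_matching by (auto simp: short_matchings_def)
    ultimately show "(\<Sum>X\<in>{X\<in>?M. (num_1arcs X, num_2arcs X) = b}. h (card X)) =
        (case b of (b1, b2) \<Rightarrow> of_nat (lam n (int b1) (int b2)) * h (b1 + b2))"
      by (simp add: b lam_eq_card_short_matchings)
  qed simp
  finally show ?thesis .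
qed

lemma S_r_formula:
  assumes "3 \<le> k"
  shows "int (S_r k n l) = (\<Sum>(b1, b2)\<in>{(b1, b2). 2 * (b1 + b2) \<le> n}.
      (-1) ^ (b1 + b2) * int (lam n (int b1) (int b2)) * int (f_nc k (n - 2 * (b1 + b2)) l))"
proof -
  have "int (S_r k n l) = (\<Sum>X | short_matching n X. (-1) ^ card X * int (f_nc k (n - 2 * card X) l))"
    unfolding S_r_inclusion_exclusion using card_k_noncrossing_supersets[OF assms] by simp
  also have "\<dots> = (\<Sum>(b1, b2)\<in>{(b1, b2). 2 * (b1 + b2) \<le> n}.
      (-1) ^ (b1 + b2) * int (lam n (int b1) (int b2)) * int (f_nc k (n - 2 * (b1 + b2)) l))"
    using sum_short_matchings_by_arc_counts[where h = "\<lambda>c. (-1) ^ c * int (f_nc k (n - 2 * c) l)"]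
    by (simp add: case_prod_unfold ac_simps)
  finally show ?thesis .
qed

lemma S_r_total_eq_sum: "int (S_r_total k n) = (\<Sum>l = 0..n. int (S_r k n l))"
proof -
  let ?R = "{A. restricted_rna k n A}"
  have fin: "finite ?R"
    by (rule finite_subset[OF _ finite_digraphs[of n]])
      (auto simp: restricted_rna_def k_noncrossing_def)
  have "(\<Sum>l = 0..n. card {A \<in> ?R. card (isolated n A) = l}) = card ?R"
    using sum.group[OF fin, of "{0..n}" "\<lambda>A. card (isolated n A)" "\<lambda>_. 1 :: nat"] card_isolated_le
    by (simp add: image_subset_iff)
  then show ?thesis
    by (simp add: S_r_total_def S_r_def flip: of_nat_sum)
qed

lemma f_nc_eq_0: "m < l \<Longrightarrow> f_nc k m l = 0"
proof -
  assume "m < l"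
  then have "{A. k_noncrossing k m A \<and> card (isolated m A) = l} = {}"
    using card_isolated_le[of m] by (auto simp: not_le[symmetric])
  then show ?thesis
    unfolding f_nc_def by (metis card.empty)
qed

lemma S_r_total_formula:
  assumes "3 \<le> k"
  shows "int (S_r_total k n) = (\<Sum>(b1, b2)\<in>{(b1, b2). 2 * (b1 + b2) \<le> n}.
      (-1) ^ (b1 + b2) * int (lam n (int b1) (int b2)) *
      (\<Sum>l = 0..n - 2 * (b1 + b2). int (f_nc k (n - 2 * (b1 + b2)) l)))"
proof -
  have "int (S_r_total k n) = (\<Sum>(b1, b2)\<in>{(b1, b2). 2 * (b1 + b2) \<le> n}. \<Sum>l = 0..n.
      (-1) ^ (b1 + b2) * int (lam n (int b1) (int b2)) * int (f_nc k (n - 2 * (b1 + b2)) l))"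
    unfolding S_r_total_eq_sum S_r_formula[OF assms] by (subst sum.swap) (simp add: case_prod_unfold)
  also have "\<dots> = (\<Sum>(b1, b2)\<in>{(b1, b2). 2 * (b1 + b2) \<le> n}.
      (-1) ^ (b1 + b2) * int (lam n (int b1) (int b2)) *
      (\<Sum>l = 0..n - 2 * (b1 + b2). int (f_nc k (n - 2 * (b1 + b2)) l)))"
  proof (rule sum.cong)
    fix b :: "nat \<times> nat"
    obtain b1 b2 where b: "b = (b1, b2)"
      by fastforce
    have trunc: "(\<Sum>l = 0..n. int (f_nc k (n - 2 * (b1 + b2)) l))
        = (\<Sum>l = 0..n - 2 * (b1 + b2). int (f_nc k (n - 2 * (b1 + b2)) l))"
      by (rule sum.mono_neutral_right) (auto simp: f_nc_eq_0)
    show "(case b of (b1, b2) \<Rightarrow> \<Sum>l = 0..n. (-1) ^ (b1 + b2) * int (lam n (int b1) (int b2))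
          * int (f_nc k (n - 2 * (b1 + b2)) l))
        = (case b of (b1, b2) \<Rightarrow> (-1) ^ (b1 + b2) * int (lam n (int b1) (int b2))
          * (\<Sum>l = 0..n - 2 * (b1 + b2). int (f_nc k (n - 2 * (b1 + b2)) l)))"
      unfolding b prod.case by (simp only: sum_distrib_left[symmetric] trunc)
  qed simp
  finally show ?thesis .
qed

theorem theorem4p1:
  fixes k n :: nat
  assumes "k > 2" and "n \<ge> 1"
  shows "(\<forall>l. int (S_r k n l) =
            (\<Sum>(b1, b2)\<in>{(b1, b2). 2 * (b1 + b2) \<le> n}.
               (-1) ^ (b1 + b2) * int (lam n (int b1) (int b2)) *
               int (f_nc k (n - 2 * (b1 + b2)) l)))
       \<and> int (S_r_total k n) =
            (\<Sum>(b1, b2)\<in>{(b1, b2). 2 * (b1 + b2) \<le> n}.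
               (-1) ^ (b1 + b2) * int (lam n (int b1) (int b2)) *
               (\<Sum>l = 0..n - 2 * (b1 + b2). int (f_nc k (n - 2 * (b1 + b2)) l)))
       \<and> (\<forall>m b1 b2. m \<ge> 4 \<longrightarrow> b1 \<ge> 0 \<longrightarrow> b2 \<ge> 0 \<longrightarrow>
            lam m b1 b2 = lam (m - 2) (b1 - 1) b2 + lam (m - 1) b1 b2
                          + lam (m - 4) b1 (b2 - 2) + lam (m - 3) b1 (b2 - 1))
       \<and> (\<forall>m. lam m 0 0 = 1)
       \<and> (\<forall>m b1. lam m (int b1) 0 = (m - b1) choose b1)
       \<and> lam 1 0 1 = 0
       \<and> (\<forall>m. m \<ge> 2 \<longrightarrow> lam m 0 1 = m - 2)
       \<and> lam 2 0 2 = 0 \<and> lam 3 0 2 = 0"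
proof -
  have "3 \<le> k"
    using assms(1) by simp
  moreover have "lam 1 0 1 = 0" "lam 2 0 2 = 0" "lam 3 0 2 = 0"
    using lam_too_many[of 1 0 1] lam_too_many[of 2 0 2] lam_too_many[of 3 0 2] by simp_all
  ultimately show ?thesis
    using S_r_formula S_r_total_formula lam_recurrence lam_0_0 lam_no_2arcs lam_single_2arc
    by simp
qed


end
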